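(* Let $n\ge3$ and let $M$ be a polytope in $\mathbb{R}^n$ with $rB\subseteq M\subseteq RB$ for some $r,R>0$. Then for any neighboring facets $F\sim F'$ of $M$ and any $f\in H^1(e_{F,F'})$, $$\int_{e_{F,F'}}\{(f')^2-f^2\}\,d\mathcal{H}^1\ge\frac{r^2}{2R^2}\int_{e_{F,F'}}f^2\,d\mathcal{H}^1-\frac{4R^2}{r^2}\,l_{F,F'}\{f(n_F)^2+f(n_{F'})^2\}.$$
   Context: $B$ is the unit ball. Facets $F,F'$ are neighbors if $\dim(F\cap F')=n-2$; $n_F$ is the outer unit normal of $F$; $e_{F,F'}\subset S^{n-1}$ is the shortest geodesic arc from $n_F$ to $n_{F'}$, of length $l_{F,F'}$, parametrized by arclength, $f'$ the arclength derivative, $H^1$ the Sobolev space with one weak $L^2$ derivative on the edge, $\mathcal{H}^1$ arclength measure. *)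

theory Defs
  imports "HOL-Analysis.Analysis"
begin

definition outer_normal :: "'a::euclidean_space set \<Rightarrow> 'a set \<Rightarrow> 'a" where
  "outer_normal M F = (THE u. norm u = 1 \<and>
      (\<exists>h. F \<subseteq> {x. inner u x = h} \<and> M \<subseteq> {x. inner u x \<le> h}))"

definition neighbor_facets :: "'a::euclidean_space set \<Rightarrow> 'a set \<Rightarrow> 'a set \<Rightarrow> bool" where
  "neighbor_facets M F F' \<longleftrightarrow> F facet_of M \<and> F' facet_of M \<and>
      aff_dim (F \<inter> F') = int DIM('a) - 2"

definition arc_len :: "'a::euclidean_space \<Rightarrow> 'a \<Rightarrow> real" where
  "arc_len a b = arccos (inner a b)"

text \<open>Arclength parametrization t \<in> [0, arc_len a b] of the shortest geodesic
  arc from a to b on the unit sphere (a, b unit, b \<noteq> \<plusminus>a).\<close>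
definition arc_param :: "'a::euclidean_space \<Rightarrow> 'a \<Rightarrow> real \<Rightarrow> 'a" where
  "arc_param a b t = (let w = b - inner a b *\<^sub>R a in
      cos t *\<^sub>R a + sin t *\<^sub>R (w /\<^sub>R norm w))"

text \<open>g' is an L^2 weak derivative of g on [0,l], with g its absolutely continuous
  representative: g \<in> H^1(0,l) with derivative g'.\<close>
definition H1_deriv :: "real \<Rightarrow> (real \<Rightarrow> real) \<Rightarrow> (real \<Rightarrow> real) \<Rightarrow> bool" where
  "H1_deriv l g g' \<longleftrightarrow> g' \<in> borel_measurable lborel \<and>
      set_integrable lborel {0..l} g' \<and>
      set_integrable lborel {0..l} (\<lambda>t. (g' t)\<^sup>2) \<and>
      (\<forall>t\<in>{0..l}. g t = g 0 + (LBINT s=0..t. g' s))"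

end

theory Submission
  imports Defs
begin

text \<open>
  Let \<open>a, b\<close> be the outer normals of neighbouring facets and \<open>\<rho> = r / R\<close>. A common point
  \<open>x\<close> of the two facets has \<open>|x| \<le> R\<close> and lies on both supporting hyperplanes, which have
  distance at least \<open>r\<close> from the origin; hence \<open>2 r \<le> (a + b) \<bullet> x \<le> R |a + b|\<close>, so
  \<open>a \<bullet> b \<ge> 2 \<rho>\<^sup>2 - 1\<close> and the arc from \<open>a\<close> to \<open>b\<close> has length \<open>l \<le> \<pi> - 2 \<rho>\<close>.

  On an interval of length \<open>l\<close> with \<open>k l < \<pi>\<close>, the weight \<open>w t = k tan (k (t - l/2))\<close> solves
  \<open>w' = k\<^sup>2 + w\<^sup>2\<close>, so integrating \<open>(f\<^sup>2 w)' = 2 f f' w + f\<^sup>2 (k\<^sup>2 + w\<^sup>2)\<close> and completing the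
  square \<open>(f' + w f)\<^sup>2 \<ge> 0\<close> gives
  \<open>\<integral> f'\<^sup>2 - k\<^sup>2 f\<^sup>2 \<ge> - k tan (k l / 2) (f(0)\<^sup>2 + f(l)\<^sup>2)\<close>.
  The choice \<open>k = 1 + \<rho>\<^sup>2/4\<close> keeps \<open>k l \<le> \<pi> - \<rho>\<close> and bounds \<open>k tan (k l / 2)\<close> by \<open>4 l / \<rho>\<^sup>2\<close>.
\<close>

section \<open>Absolutely continuous functions on an interval\<close>

definition is_primitive :: "real \<Rightarrow> (real \<Rightarrow> real) \<Rightarrow> (real \<Rightarrow> real) \<Rightarrow> bool" where
  "is_primitive l u u' \<longleftrightarrow> set_integrable lborel {0..l} u' \<and>
      (\<forall>t\<in>{0..l}. u t = u 0 + (LBINT s:{0..t}. u' s))"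

lemma interval_integral_from_0:
  fixes f :: "real \<Rightarrow> real"
  assumes "0 \<le> t"
  shows "(LBINT s=0..t. f s) = (LBINT s:{0..t}. f s)"
  using interval_integral_Icc[OF assms, of f] by (metis zero_ereal_def)

lemma H1_deriv_imp_is_primitive:
  assumes "H1_deriv l g g'"
  shows "is_primitive l g g'"
  using assms interval_integral_from_0[of _ g'] unfolding H1_deriv_def is_primitive_def
  by (metis atLeastAtMost_iff)

lemma is_primitive_subinterval:
  assumes "is_primitive l u u'" "t \<in> {0..l}"
  shows "is_primitive t u u'"
proof -
  have sub: "{0..t} \<subseteq> {0..l}"
    using assms(2) by auto
  have int: "set_integrable lborel {0..l} u'" and eq: "\<forall>s\<in>{0..l}. u s = u 0 + (LBINT r:{0..s}. u' r)"
    using assms(1) unfolding is_primitive_def by blast+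
  have "set_integrable lborel {0..t} u'"
    by (rule set_integrable_subset[OF int _ sub]) simp
  then show ?thesis
    using eq sub unfolding is_primitive_def by blast
qed

lemma is_primitive_integral:
  assumes "is_primitive l u u'" "0 \<le> l"
  shows "(LBINT t:{0..l}. u' t) = u l - u 0"
proof -
  have "l \<in> {0..l}"
    using assms(2) by simp
  then have "u l = u 0 + (LBINT t:{0..l}. u' t)"
    using assms(1) unfolding is_primitive_def by blast
  then show ?thesis
    by simp
qed

lemma continuous_on_set_integral_Icc:
  fixes f :: "real \<Rightarrow> real"
  assumes "set_integrable lborel {0..l} f"
  shows "continuous_on {0..l} (\<lambda>t. LBINT s:{0..t}. f s)"
proof (rule continuous_on_eq)
  show "continuous_on {0..l} (\<lambda>t. integral {0..t} f)"
    using assms by (intro indefinite_integral_continuous_1 set_borel_integral_eq_integral(1))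
  show "integral {0..t} f = (LBINT s:{0..t}. f s)" if "t \<in> {0..l}" for t
    using that set_integrable_subset[OF assms, of "{0..t}"]
    by (simp add: set_borel_integral_eq_integral(2))
qed

lemma is_primitive_continuous:
  assumes "is_primitive l u u'"
  shows "continuous_on {0..l} u"
proof (rule continuous_on_eq)
  show "continuous_on {0..l} (\<lambda>t. u 0 + (LBINT s:{0..t}. u' s))"
    using assms unfolding is_primitive_def
    by (intro continuous_intros continuous_on_set_integral_Icc) blast
  show "u 0 + (LBINT s:{0..t}. u' s) = u t" if "t \<in> {0..l}" for t
    using assms that unfolding is_primitive_def by metis
qed

lemma set_integrable_mult_continuous:
  fixes f h :: "real \<Rightarrow> real"
  assumes f: "set_integrable lborel {a..b} f" and h: "continuous_on {a..b} h"
  shows "set_integrable lborel {a..b} (\<lambda>t. f t * h t)"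
proof -
  obtain B where B: "\<forall>y \<in> h ` {a..b}. norm y \<le> B"
    using compact_imp_bounded[OF compact_continuous_image[OF h compact_Icc]]
    unfolding bounded_iff by blast
  have "(\<lambda>t. indicator {a..b} t *\<^sub>R h t) \<in> borel_measurable lborel"
    using borel_measurable_continuous_on_indicator[OF _ h] by simp
  moreover have "(\<lambda>t. indicator {a..b} t *\<^sub>R f t) \<in> borel_measurable lborel"
    using f unfolding set_integrable_def by (rule borel_measurable_integrable)
  ultimately have "(\<lambda>t. (indicator {a..b} t *\<^sub>R f t) * (indicator {a..b} t *\<^sub>R h t))
      \<in> borel_measurable lborel"
    by (rule borel_measurable_times[rotated])
  also have "(\<lambda>t. (indicator {a..b} t *\<^sub>R f t) * (indicator {a..b} t *\<^sub>R h t)) =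
      (\<lambda>t. indicator {a..b} t *\<^sub>R (f t * h t))"
    by (auto simp: indicator_def)
  finally have "set_borel_measurable lborel {a..b} (\<lambda>t. f t * h t)"
    unfolding set_borel_measurable_def .
  then show ?thesis
  proof (rule set_integrable_bound[rotated])
    show "set_integrable lborel {a..b} (\<lambda>t. f t * B)"
      using f by simp
    show "AE t in lborel. t \<in> {a..b} \<longrightarrow> norm (f t * h t) \<le> norm (f t * B)"
    proof (intro AE_I2 impI)
      fix t assume "t \<in> {a..b}"
      then have "norm (h t) \<le> B"
        using B by blast
      then have "\<bar>h t\<bar> \<le> \<bar>B\<bar>"
        by (metis real_norm_def abs_ge_self order_trans)
      then show "norm (f t * h t) \<le> norm (f t * B)"
        by (simp add: abs_mult mult_left_mono)
    qed
  qed
qed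

lemma integrable_lower_triangle_product:
  fixes A B :: "real \<Rightarrow> real"
  assumes A: "integrable lborel A" and B: "integrable lborel B"
  shows "integrable (lborel \<Otimes>\<^sub>M lborel) (\<lambda>(s, t). indicator {(s, t). t \<le> s} (s, t) * (A s * B t))"
proof -
  have [measurable]: "A \<in> borel_measurable lborel" "B \<in> borel_measurable lborel"
    using A B by auto
  have "integrable (lborel \<Otimes>\<^sub>M lborel) (\<lambda>(s, t). A s * B t)"
  proof (rule lborel_pair.Fubini_integrable)
    show "integrable lborel (\<lambda>s. \<integral>t. norm (case (s, t) of (s, t) \<Rightarrow> A s * B t) \<partial>lborel)"
      using A by (simp add: abs_mult)
    show "AE s in lborel. integrable lborel (\<lambda>t. case (s, t) of (s, t) \<Rightarrow> A s * B t)"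
      using B by simp
  qed measurable
  moreover have "{(s, t). t \<le> s} \<in> sets (lborel \<Otimes>\<^sub>M (lborel :: real measure))"
    unfolding lborel_prod sets_lborel case_prod_unfold
    by (intro borel_closed closed_Collect_le continuous_intros)
  ultimately have "integrable (lborel \<Otimes>\<^sub>M lborel)
      (\<lambda>p. indicator {(s, t). t \<le> s} p *\<^sub>R (case p of (s, t) \<Rightarrow> A s * B t))"
    by (rule integrable_mult_indicator[rotated])
  then show ?thesis
    by (simp add: case_prod_unfold)
qed

lemma set_integral_Icc_diff:
  fixes a :: "real \<Rightarrow> real"
  assumes a: "set_integrable lborel {0..l} a" and t: "t \<in> {0..l}"
  shows "(LBINT s:{t..l}. a s) = (LBINT s:{0..l}. a s) - (LBINT s:{0..t}. a s)"
proof -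
  have "set_integrable lborel {0..<t} a" "set_integrable lborel {t..l} a"
    using t by (auto intro: set_integrable_subset[OF a])
  moreover have "{0..l} = {0..<t} \<union> {t..l}" "{0..<t} \<inter> {t..l} = {}"
    using t by auto
  ultimately have "(LBINT s:{0..l}. a s) = (LBINT s:{0..<t}. a s) + (LBINT s:{t..l}. a s)"
    by (simp add: set_integral_Un)
  moreover have "(LBINT s:{0..<t}. a s) = (LBINT s:{0..t}. a s)"
    using t interval_integral_Icc[of 0 t a] interval_integral_Ico[of 0 t a] by simp
  ultimately show ?thesis
    by simp
qed

lemma set_integral_Icc_product_split:
  fixes a b :: "real \<Rightarrow> real"
  assumes a: "set_integrable lborel {0..l} a" and b: "set_integrable lborel {0..l} b"
  shows "(LBINT s:{0..l}. a s * (LBINT t:{0..s}. b t)) + (LBINT t:{0..l}. b t * (LBINT s:{0..t}. a s))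
    = (LBINT s:{0..l}. a s) * (LBINT t:{0..l}. b t)"
proof -
  define \<phi> where "\<phi> s t = indicator {(s, t). t \<le> s} (s, t) *
      ((indicator {0..l} s * a s) * (indicator {0..l} t * b t))" for s t :: real
  have "integrable (lborel \<Otimes>\<^sub>M lborel) (case_prod \<phi>)"
    using a b unfolding \<phi>_def set_integrable_def
    by (intro integrable_lower_triangle_product) simp_all
  then have Fubini: "(\<integral>t. (\<integral>s. \<phi> s t \<partial>lborel) \<partial>lborel) = (\<integral>s. (\<integral>t. \<phi> s t \<partial>lborel) \<partial>lborel)"
    by (rule lborel_pair.Fubini_integral)
  define U where "U t = (LBINT s:{0..t}. a s)" for t
  define V where "V s = (LBINT t:{0..s}. b t)" for s
  have "\<phi> s t = indicator {0..l} s * a s * (indicator {0..s} t * b t)" for s t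
    unfolding \<phi>_def by (auto simp: indicator_def)
  then have "(\<integral>t. \<phi> s t \<partial>lborel) = indicator {0..l} s * (a s * V s)" for s
    unfolding V_def set_lebesgue_integral_def by simp
  then have inner_t: "(\<integral>s. (\<integral>t. \<phi> s t \<partial>lborel) \<partial>lborel) = (LBINT s:{0..l}. a s * V s)"
    unfolding set_lebesgue_integral_def by simp
  have "\<phi> s t = indicator {0..l} t * b t * (indicator {t..l} s * a s)" for s t
    unfolding \<phi>_def by (auto simp: indicator_def)
  then have "(\<integral>s. \<phi> s t \<partial>lborel) = indicator {0..l} t * b t * (LBINT s:{t..l}. a s)" for t
    unfolding set_lebesgue_integral_def by simp
  also have "\<dots>t = indicator {0..l} t * b t * (LBINT s:{0..l}. a s) - indicator {0..l} t * (b t * U t)"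
    for t
    unfolding U_def using set_integral_Icc_diff[OF a, of t]
    by (cases "t \<in> {0..l}") (simp_all add: right_diff_distrib)
  finally have inner_s: "(\<integral>s. \<phi> s t \<partial>lborel)
      = indicator {0..l} t * b t * (LBINT s:{0..l}. a s) - indicator {0..l} t * (b t * U t)" for t .
  have "set_integrable lborel {0..l} (\<lambda>t. b t * U t)"
    unfolding U_def by (intro set_integrable_mult_continuous b continuous_on_set_integral_Icc a)
  then have "(\<integral>t. (\<integral>s. \<phi> s t \<partial>lborel) \<partial>lborel)
      = (LBINT t:{0..l}. b t) * (LBINT s:{0..l}. a s) - (LBINT t:{0..l}. b t * U t)"
    using b unfolding inner_s set_lebesgue_integral_def set_integrable_def by simp
  with Fubini inner_t show ?thesis
    unfolding U_def V_def by (simp add: mult.commute)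
qed

lemma set_integral_mult_is_primitive:
  fixes f :: "real \<Rightarrow> real"
  assumes f: "set_integrable lborel {0..l} f" and v: "is_primitive l v v'"
  shows "(LBINT t:{0..l}. f t * v t)
    = v 0 * (LBINT t:{0..l}. f t) + (LBINT t:{0..l}. f t * (LBINT s:{0..t}. v' s))"
proof -
  have "f t * v t = v 0 * f t + f t * (LBINT s:{0..t}. v' s)" if "t \<in> {0..l}" for t
  proof -
    have "v t = v 0 + (LBINT s:{0..t}. v' s)"
      using v that unfolding is_primitive_def by blast
    then show ?thesis
      by (simp add: algebra_simps)
  qed
  then have "(LBINT t:{0..l}. f t * v t) = (LBINT t:{0..l}. v 0 * f t + f t * (LBINT s:{0..t}. v' s))"
    by (intro set_lebesgue_integral_cong) auto
  moreover have "set_integrable lborel {0..l} (\<lambda>t. f t * (LBINT s:{0..t}. v' s))"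
    using v unfolding is_primitive_def
    by (intro set_integrable_mult_continuous f continuous_on_set_integral_Icc) blast
  ultimately show ?thesis
    using f by simp
qed

lemma is_primitive_mult_integral:
  assumes u: "is_primitive l u u'" and v: "is_primitive l v v'" and l: "0 \<le> l"
  shows "set_integrable lborel {0..l} (\<lambda>t. u' t * v t + u t * v' t)"
    and "(LBINT t:{0..l}. u' t * v t + u t * v' t) = u l * v l - u 0 * v 0"
proof -
  have iu: "set_integrable lborel {0..l} u'" and iv: "set_integrable lborel {0..l} v'"
    using u v unfolding is_primitive_def by blast+
  define U where "U = (LBINT t:{0..l}. u' t)"
  define V where "V = (LBINT t:{0..l}. v' t)"
  have iu'v: "set_integrable lborel {0..l} (\<lambda>t. u' t * v t)"
    by (rule set_integrable_mult_continuous[OF iu is_primitive_continuous[OF v]])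
  have iuv': "set_integrable lborel {0..l} (\<lambda>t. v' t * u t)"
    by (rule set_integrable_mult_continuous[OF iv is_primitive_continuous[OF u]])
  then show "set_integrable lborel {0..l} (\<lambda>t. u' t * v t + u t * v' t)"
    using iu'v by (simp add: mult.commute)
  have "(LBINT t:{0..l}. u' t * v t + u t * v' t) = (LBINT t:{0..l}. u' t * v t) + (LBINT t:{0..l}. v' t * u t)"
    using iu'v iuv' by (simp add: mult.commute)
  also have "\<dots> = v 0 * U + u 0 * V
      + ((LBINT t:{0..l}. u' t * (LBINT s:{0..t}. v' s)) + (LBINT t:{0..l}. v' t * (LBINT s:{0..t}. u' s)))"
    unfolding U_def V_def
    using set_integral_mult_is_primitive[OF iu v] set_integral_mult_is_primitive[OF iv u] by simp
  also have "\<dots> = v 0 * U + u 0 * V + U * V"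
    unfolding U_def V_def using set_integral_Icc_product_split[OF iu iv] by simp
  also have "\<dots> = u l * v l - u 0 * v 0"
  proof -
    have "u l = u 0 + U" "v l = v 0 + V"
      using is_primitive_integral[OF u l] is_primitive_integral[OF v l]
      unfolding U_def V_def by simp_all
    then show ?thesis
      by (simp add: algebra_simps)
  qed
  finally show "(LBINT t:{0..l}. u' t * v t + u t * v' t) = u l * v l - u 0 * v 0" .
qed

lemma is_primitive_mult:
  assumes u: "is_primitive l u u'" and v: "is_primitive l v v'"
  shows "is_primitive l (\<lambda>t. u t * v t) (\<lambda>t. u' t * v t + u t * v' t)"
proof (cases "0 \<le> l")
  case True
  have "u t * v t = u 0 * v 0 + (LBINT s:{0..t}. u' s * v s + u s * v' s)" if "t \<in> {0..l}" for t
    using is_primitive_mult_integral(2)[OF is_primitive_subinterval[OF u that]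
        is_primitive_subinterval[OF v that]] that
    by simp
  then show ?thesis
    using is_primitive_mult_integral(1)[OF u v True] unfolding is_primitive_def by blast
qed (simp add: is_primitive_def)

lemma has_real_derivative_imp_is_primitive:
  assumes w: "\<And>t. t \<in> {0..l} \<Longrightarrow> (w has_real_derivative w' t) (at t)"
    and w': "continuous_on {0..l} w'"
  shows "is_primitive l w w'"
  unfolding is_primitive_def
proof
  show "set_integrable lborel {0..l} w'"
    by (rule borel_integrable_atLeastAtMost'[OF w'])
  show "\<forall>t\<in>{0..l}. w t = w 0 + (LBINT s:{0..t}. w' s)"
  proof
    fix t assume t: "t \<in> {0..l}"
    have "(LBINT s:{0..t}. w' s) = w t - w 0"
      unfolding set_lebesgue_integral_def
    proof (rule integral_FTC_atLeastAtMost)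
      show "(w has_vector_derivative w' s) (at s within {0..t})" if "0 \<le> s" "s \<le> t" for s
        using w[of s] that t
        by (auto simp: has_real_derivative_iff_has_vector_derivative[symmetric]
            intro: has_field_derivative_at_within)
      show "continuous_on {0..t} w'"
        using t by (auto intro: continuous_on_subset[OF w'])
    qed (use t in simp)
    then show "w t = w 0 + (LBINT s:{0..t}. w' s)"
      by simp
  qed
qed

section \<open>A Poincare inequality with boundary terms\<close>

lemma is_primitive_tan_weight:
  fixes k l :: real
  assumes "0 < k" "k * l < pi"
  shows "is_primitive l (\<lambda>t. k * tan (k * (t - l / 2))) (\<lambda>t. k\<^sup>2 + (k * tan (k * (t - l / 2)))\<^sup>2)"
proof (rule has_real_derivative_imp_is_primitive)
  have cos_pos: "0 < cos (k * (t - l / 2))" if "t \<in> {0..l}" for t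
  proof (rule cos_gt_zero_pi)
    have "0 \<le> k * t" "k * t \<le> k * l"
      using that assms by (simp_all add: mult_left_mono)
    moreover have "k * (t - l / 2) = k * t - k * l / 2"
      by (simp add: algebra_simps)
    ultimately show "- (pi / 2) < k * (t - l / 2)" and "k * (t - l / 2) < pi / 2"
      using assms by linarith+
  qed
  show "((\<lambda>t. k * tan (k * (t - l / 2))) has_real_derivative k\<^sup>2 + (k * tan (k * (t - l / 2)))\<^sup>2) (at t)"
    if "t \<in> {0..l}" for t
  proof -
    define x where "x = k * (t - l / 2)"
    have "cos x \<noteq> 0"
      using cos_pos[OF that] unfolding x_def by simp
    then have "inverse ((cos x)\<^sup>2) = 1 + (tan x)\<^sup>2"
      by (simp add: tan_def field_simps sin_squared_eq)
    moreover have "((\<lambda>t. k * tan (k * (t - l / 2))) has_real_derivative k * (k * inverse ((cos x)\<^sup>2))) (at t)"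
      unfolding x_def using \<open>cos x \<noteq> 0\<close>[unfolded x_def]
      by (auto intro!: derivative_eq_intros)
    ultimately show ?thesis
      unfolding x_def by (simp add: power_mult_distrib algebra_simps power2_eq_square)
  qed
  show "continuous_on {0..l} (\<lambda>t. k\<^sup>2 + (k * tan (k * (t - l / 2)))\<^sup>2)"
    using cos_pos by (auto intro!: continuous_intros simp: less_imp_neq[symmetric])
qed

lemma energy_ge_tan_boundary_terms:
  fixes g g' :: "real \<Rightarrow> real" and c k l :: real
  assumes l: "0 \<le> l" and k: "0 < k" "k * l < pi" and c: "c \<le> k\<^sup>2"
    and g: "is_primitive l g g'" and g': "set_integrable lborel {0..l} (\<lambda>t. (g' t)\<^sup>2)"
  shows "(LBINT t:{0..l}. (g' t)\<^sup>2 - c * (g t)\<^sup>2) \<ge> - k * tan (k * l / 2) * ((g 0)\<^sup>2 + (g l)\<^sup>2)"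
proof -
  define w where "w t = k * tan (k * (t - l / 2))" for t
  have "is_primitive l w (\<lambda>t. k\<^sup>2 + (w t)\<^sup>2)"
    unfolding w_def using k by (rule is_primitive_tan_weight)
  note boundary = is_primitive_mult_integral[OF is_primitive_mult[OF g g] this l]
  define E where "E t = (g' t * g t + g t * g' t) * w t + g t * g t * (k\<^sup>2 + (w t)\<^sup>2)" for t
  define Q where "Q t = (g' t)\<^sup>2 - c * (g t)\<^sup>2" for t
  have "set_integrable lborel {0..l} (\<lambda>t. (g t)\<^sup>2)"
    using is_primitive_continuous[OF g]
    by (intro borel_integrable_atLeastAtMost' continuous_intros)
  then have iQ: "set_integrable lborel {0..l} Q"
    unfolding Q_def using g' by simp
  have "Q t + E t = (g' t + w t * g t)\<^sup>2 + (k\<^sup>2 - c) * (g t)\<^sup>2" for t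
    unfolding Q_def E_def by (simp add: algebra_simps power2_eq_square)
  then have "0 \<le> Q t + E t" for t
    using c by simp
  then have "0 \<le> (LBINT t:{0..l}. Q t + E t)"
    unfolding set_lebesgue_integral_def by (simp add: indicator_def)
  also have "\<dots> = (LBINT t:{0..l}. Q t) + (g l * g l * w l - g 0 * g 0 * w 0)"
    using iQ boundary unfolding E_def by simp
  also have "g l * g l * w l - g 0 * g 0 * w 0 = k * tan (k * l / 2) * ((g 0)\<^sup>2 + (g l)\<^sup>2)"
    unfolding w_def by (simp add: power2_eq_square algebra_simps)
  finally show ?thesis
    unfolding Q_def by linarith
qed

lemma poincare_with_boundary_terms:
  fixes g g' :: "real \<Rightarrow> real" and c k l :: real
  assumes l: "0 \<le> l" and k: "0 < k" "k * l < pi" and c: "c \<le> k\<^sup>2"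
    and g: "H1_deriv l g g'"
  shows "(LBINT t=0..l. (g' t)\<^sup>2 - (g t)\<^sup>2)
    \<ge> (c - 1) * (LBINT t=0..l. (g t)\<^sup>2) - k * tan (k * l / 2) * ((g 0)\<^sup>2 + (g l)\<^sup>2)"
proof -
  have gp: "is_primitive l g g'"
    using g by (rule H1_deriv_imp_is_primitive)
  have ig': "set_integrable lborel {0..l} (\<lambda>t. (g' t)\<^sup>2)"
    using g unfolding H1_deriv_def by blast
  have ig: "set_integrable lborel {0..l} (\<lambda>t. (g t)\<^sup>2)"
    using is_primitive_continuous[OF gp]
    by (intro borel_integrable_atLeastAtMost' continuous_intros)
  have "(LBINT t:{0..l}. (g' t)\<^sup>2 - (g t)\<^sup>2) = (LBINT t:{0..l}. ((g' t)\<^sup>2 - c * (g t)\<^sup>2) + (c - 1) * (g t)\<^sup>2)"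
    by (simp add: algebra_simps)
  also have "\<dots> = (LBINT t:{0..l}. (g' t)\<^sup>2 - c * (g t)\<^sup>2) + (c - 1) * (LBINT t:{0..l}. (g t)\<^sup>2)"
    using ig' ig by simp
  finally show ?thesis
    using energy_ge_tan_boundary_terms[OF l k c gp ig'] interval_integral_from_0[OF l] by simp
qed

lemma sin_ge_cubic_lower_bound:
  fixes x :: real
  assumes "0 \<le> x"
  shows "x - x ^ 3 / 6 \<le> sin x"
proof -
  have "\<bar>sin x - (\<Sum>m<3. sin_coeff m * x ^ m)\<bar> \<le> inverse (fact 3) * \<bar>x\<bar> ^ 3"
    by (rule Maclaurin_sin_bound)
  moreover have "(\<Sum>m<3. sin_coeff m * x ^ m) = x"
    by (simp add: lessThan_nat_numeral sin_coeff_def)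
  moreover have "inverse (fact 3) * \<bar>x\<bar> ^ 3 = x ^ 3 / 6"
    using assms by (simp add: fact_numeral field_simps)
  ultimately show ?thesis
    by linarith
qed

lemma arccos_le_pi_minus_double:
  fixes \<rho> c :: real
  assumes "0 \<le> \<rho>" "\<rho> \<le> pi / 2" "2 * \<rho>\<^sup>2 - 1 \<le> c" "c \<le> 1"
  shows "arccos c \<le> pi - 2 * \<rho>"
proof -
  have "sin \<rho> \<le> \<rho>" "0 \<le> sin \<rho>"
    using assms by (auto intro: sin_ge_zero sin_x_le_x)
  then have "(sin \<rho>)\<^sup>2 \<le> \<rho>\<^sup>2"
    by (rule power_mono)
  then have "cos (pi - 2 * \<rho>) \<le> c"
    using assms(3) by (simp add: cos_double_sin)
  then have "arccos c \<le> arccos (cos (pi - 2 * \<rho>))"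
    using assms(4) by (intro arccos_le_arccos) auto
  also have "\<dots> = pi - 2 * \<rho>"
    using assms(1,2) by (intro arccos_cos) auto
  finally show ?thesis .
qed

lemma tan_weight_angle_le:
  fixes \<rho> l :: real
  assumes \<rho>: "0 < \<rho>" "\<rho> \<le> 1" and l: "0 \<le> l" "l \<le> pi - 2 * \<rho>"
  shows "(1 + \<rho>\<^sup>2 / 4) * l \<le> pi - \<rho>"
proof -
  have "(1 + \<rho>\<^sup>2 / 4) * l \<le> (1 + \<rho>\<^sup>2 / 4) * (pi - 2 * \<rho>)"
    using l by (intro mult_left_mono) auto
  also have "\<dots> \<le> pi - \<rho>"
  proof -
    have "pi * \<rho> \<le> 4"
      using \<rho> pi_less_4 mult_mono[of pi 4 \<rho> 1] by simp
    then have "\<rho> * (pi * \<rho>) \<le> \<rho> * 4"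
      using \<rho> by (intro mult_left_mono) auto
    moreover have "0 \<le> \<rho> * \<rho> * \<rho>"
      using \<rho> by simp
    moreover have "(1 + \<rho>\<^sup>2 / 4) * (pi - 2 * \<rho>)
        = pi - \<rho> - (\<rho> - \<rho> * (pi * \<rho>) / 4 + \<rho> * \<rho> * \<rho> / 2)"
      by (simp add: field_simps power2_eq_square)
    ultimately show ?thesis
      by linarith
  qed
  finally show ?thesis .
qed

lemma cos_ge_quarter_of_margin:
  fixes \<rho> x :: real
  assumes \<rho>: "0 < \<rho>" "\<rho> \<le> 1" and x: "0 \<le> x" "x \<le> pi / 2 - \<rho> / 2"
  shows "\<rho> / 4 \<le> cos x"
proof -
  have "\<rho> / 4 \<le> \<rho> / 2 - (\<rho> / 2) ^ 3 / 6"
    using \<rho> mult_mono[of \<rho> 1 \<rho> 1] by (simp add: power3_eq_cube)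
  also have "\<dots> \<le> sin (\<rho> / 2)"
    using \<rho> by (intro sin_ge_cubic_lower_bound) simp
  also have "\<dots> \<le> sin (pi / 2 - x)"
    using x \<rho> pi_gt3 by (subst sin_mono_le_eq) auto
  finally show ?thesis
    by (simp add: sin_cos_eq)
qed

lemma tan_weight_bounds:
  fixes \<rho> l :: real
  assumes \<rho>: "0 < \<rho>" "\<rho> \<le> 1" and l: "0 \<le> l" "l \<le> pi - 2 * \<rho>"
  defines "k \<equiv> 1 + \<rho>\<^sup>2 / 4"
  shows "k * l < pi" and "k * tan (k * l / 2) \<le> 4 * l / \<rho>\<^sup>2"
proof -
  have k: "1 \<le> k" "k \<le> 5 / 4"
    unfolding k_def using \<rho> by (auto simp: power_le_one)
  then have k2: "k\<^sup>2 \<le> 2"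
    using mult_mono[of k "5/4" k "5/4"] by (simp add: power2_eq_square)
  have kl: "k * l \<le> pi - \<rho>"
    unfolding k_def using \<rho> l by (rule tan_weight_angle_le)
  then show "k * l < pi"
    using \<rho> by simp
  define x where "x = k * l / 2"
  have x: "0 \<le> x" "x \<le> pi / 2 - \<rho> / 2"
    unfolding x_def using k l kl by auto
  have "tan x \<le> x / (\<rho> / 4)"
    unfolding tan_def using cos_ge_quarter_of_margin[OF \<rho> x] x \<rho> sin_x_le_x[OF x(1)]
    by (intro frac_le) auto
  then have "k * tan x \<le> k * (x / (\<rho> / 4))"
    using k by (intro mult_left_mono) auto
  also have "\<dots> = 2 * k\<^sup>2 * l / \<rho>"
    unfolding x_def using \<rho> by (simp add: field_simps power2_eq_square)
  also have "\<dots> \<le> 4 * l / \<rho>"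
    using mult_right_mono[OF k2 l(1)] \<rho> by (intro divide_right_mono) (auto simp: mult.commute)
  also have "\<dots> \<le> 4 * l / \<rho>\<^sup>2"
    using l \<rho> by (intro divide_left_mono) (auto simp: power2_eq_square mult_le_cancel_left1)
  finally show "k * tan (k * l / 2) \<le> 4 * l / \<rho>\<^sup>2"
    unfolding x_def .
qed

lemma poincare_short_arc:
  fixes g g' :: "real \<Rightarrow> real" and \<rho> l :: real
  assumes \<rho>: "0 < \<rho>" "\<rho> \<le> 1" and l: "0 \<le> l" "l \<le> pi - 2 * \<rho>" and g: "H1_deriv l g g'"
  shows "(LBINT t=0..l. (g' t)\<^sup>2 - (g t)\<^sup>2)
    \<ge> \<rho>\<^sup>2 / 2 * (LBINT t=0..l. (g t)\<^sup>2) - 4 * l / \<rho>\<^sup>2 * ((g 0)\<^sup>2 + (g l)\<^sup>2)"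
proof -
  define k where "k = 1 + \<rho>\<^sup>2 / 4"
  note weight = tan_weight_bounds[OF \<rho> l, folded k_def]
  have "0 < k"
    unfolding k_def by (simp add: add_pos_nonneg)
  have "1 + \<rho>\<^sup>2 / 2 \<le> k\<^sup>2"
    unfolding k_def using \<rho> by (simp add: power2_eq_square algebra_simps)
  from poincare_with_boundary_terms[OF l(1) \<open>0 < k\<close> weight(1) this g]
  have "(LBINT t=0..l. (g' t)\<^sup>2 - (g t)\<^sup>2)
      \<ge> \<rho>\<^sup>2 / 2 * (LBINT t=0..l. (g t)\<^sup>2) - k * tan (k * l / 2) * ((g 0)\<^sup>2 + (g l)\<^sup>2)"
    by simp
  moreover have "k * tan (k * l / 2) * ((g 0)\<^sup>2 + (g l)\<^sup>2) \<le> 4 * l / \<rho>\<^sup>2 * ((g 0)\<^sup>2 + (g l)\<^sup>2)"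
    using weight(2) by (rule mult_right_mono) simp
  ultimately show ?thesis
    by linarith
qed

section \<open>Outer normals of neighbouring facets\<close>

lemma unit_normals_of_equal_hyperplanes:
  fixes u v :: "'a::euclidean_space"
  assumes u: "norm u = 1" and v: "norm v = 1" and eq: "{x. u \<bullet> x = h} = {x. v \<bullet> x = k}"
  shows "v = u \<or> v = - u"
proof -
  have uu: "u \<bullet> u = 1" and vv: "v \<bullet> v = 1"
    using u v by (simp_all add: dot_square_norm)
  define z where "z = v - (u \<bullet> v) *\<^sub>R u"
  have "u \<bullet> (h *\<^sub>R u) = h" and "u \<bullet> (h *\<^sub>R u + z) = h"
    unfolding z_def using uu by (simp_all add: inner_add_right inner_diff_right)
  then have "v \<bullet> (h *\<^sub>R u) = k" and "v \<bullet> (h *\<^sub>R u + z) = k"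
    using eq by blast+
  then have "v \<bullet> z = 0"
    by (simp add: inner_add_right)
  then have uv: "(u \<bullet> v) * (u \<bullet> v) = 1"
    unfolding z_def using vv by (simp add: inner_diff_right inner_commute)
  have "z \<bullet> z = 0"
    unfolding z_def using uu vv uv
    by (simp add: inner_diff_right inner_diff_left inner_commute algebra_simps)
  then have "v = (u \<bullet> v) *\<^sub>R u"
    unfolding z_def by simp
  moreover have "u \<bullet> v = 1 \<or> u \<bullet> v = -1"
    using uv by (metis mult_cancel_left1 square_eq_1_iff)
  ultimately show ?thesis
    by auto
qed

lemma affine_hull_eq_hyperplane:
  fixes S :: "'a::euclidean_space set"
  assumes S: "aff_dim S = DIM('a) - 1" and w: "w \<noteq> 0" and Sw: "S \<subseteq> {x. w \<bullet> x = k}"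
  shows "affine hull S = {x. w \<bullet> x = k}"
proof (rule affine_dim_equal)
  show "affine hull S \<noteq> {}"
    using S by auto
  show "affine hull S \<subseteq> {x. w \<bullet> x = k}"
    using Sw by (intro hull_minimal) (auto intro: affine_hyperplane)
  show "aff_dim (affine hull S) = aff_dim {x. w \<bullet> x = k}"
    using S w by simp
qed (auto intro: affine_hyperplane)

lemma supporting_unit_normal_unique:
  fixes M F :: "'a::euclidean_space set"
  assumes M: "aff_dim M = DIM('a)" and F: "aff_dim F = DIM('a) - 1"
    and u: "norm u = 1" "F \<subseteq> {x. u \<bullet> x = h}" "M \<subseteq> {x. u \<bullet> x \<le> h}"
    and v: "norm v = 1" "F \<subseteq> {x. v \<bullet> x = k}" "M \<subseteq> {x. v \<bullet> x \<le> k}"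
  shows "v = u"
proof -
  have "u \<noteq> 0" "v \<noteq> 0"
    using u(1) v(1) by auto
  then have eq: "{x. u \<bullet> x = h} = {x. v \<bullet> x = k}"
    using affine_hull_eq_hyperplane[OF F _ u(2)] affine_hull_eq_hyperplane[OF F _ v(2)] by simp
  have "v \<noteq> - u"
  proof
    assume vu: "v = - u"
    have "h *\<^sub>R u \<in> {x. u \<bullet> x = h}"
      using u(1) by (simp add: dot_square_norm)
    then have "v \<bullet> (h *\<^sub>R u) = k"
      using eq by blast
    then have k: "k = - h"
      using vu u(1) by (simp add: dot_square_norm)
    have "M \<subseteq> {x. u \<bullet> x = h}"
    proof
      fix x assume "x \<in> M"
      then have "u \<bullet> x \<le> h" "v \<bullet> x \<le> k"
        using u(3) v(3) by auto
      then show "x \<in> {x. u \<bullet> x = h}"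
        using vu k by simp
    qed
    then have "aff_dim M \<le> aff_dim {x. u \<bullet> x = h}"
      by (rule aff_dim_subset)
    also have "\<dots> = DIM('a) - 1"
      using \<open>u \<noteq> 0\<close> by simp
    finally show False
      using M by simp
  qed
  then show "v = u"
    using unit_normals_of_equal_hyperplanes[OF u(1) v(1) eq] by blast
qed

lemma outer_normal_facet:
  fixes M F :: "'a::euclidean_space set"
  assumes M: "polyhedron M" "aff_dim M = DIM('a)" and F: "F facet_of M"
  shows "norm (outer_normal M F) = 1"
    and "\<exists>h. F \<subseteq> {x. outer_normal M F \<bullet> x = h} \<and> M \<subseteq> {x. outer_normal M F \<bullet> x \<le> h}"
proof -
  obtain a b where a: "a \<noteq> 0" and Ma: "M \<subseteq> {x. a \<bullet> x \<le> b}" and Fa: "F = M \<inter> {x. a \<bullet> x = b}"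
    using facet_of_polyhedron[OF M(1) F] .
  define u where "u = a /\<^sub>R norm a"
  define h where "h = b / norm a"
  have nu: "norm u = 1"
    unfolding u_def using a by simp
  have u_inner: "u \<bullet> x = a \<bullet> x / norm a" for x
    unfolding u_def by (simp add: divide_inverse mult.commute)
  have Fu: "F \<subseteq> {x. u \<bullet> x = h}" and Mu: "M \<subseteq> {x. u \<bullet> x \<le> h}"
    using Fa Ma a unfolding h_def by (auto simp: u_inner divide_right_mono)
  have affF: "aff_dim F = DIM('a) - 1"
    using F M(2) unfolding facet_of_def by simp
  have "outer_normal M F = u"
    unfolding outer_normal_def using nu Fu Mu
    by (intro the_equality) (blast intro: supporting_unit_normal_unique[OF M(2) affF nu Fu Mu])+
  then show "norm (outer_normal M F) = 1"
    and "\<exists>h. F \<subseteq> {x. outer_normal M F \<bullet> x = h} \<and> M \<subseteq> {x. outer_normal M F \<bullet> x \<le> h}"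
    using nu Fu Mu by blast+
qed

lemma inner_lower_bound_of_common_point:
  fixes a b x :: "'a::euclidean_space"
  assumes a: "norm a = 1" and b: "norm b = 1" and x: "norm x \<le> R"
    and r: "0 < r" "r \<le> a \<bullet> x" "r \<le> b \<bullet> x"
  shows "2 * (r / R)\<^sup>2 - 1 \<le> a \<bullet> b"
proof -
  have "r \<le> norm x"
    using r(2) norm_cauchy_schwarz[of a x] a by simp
  then have R: "0 < R"
    using r(1) x by linarith
  have "2 * r \<le> (a + b) \<bullet> x"
    using r by (simp add: inner_add_left)
  also have "\<dots> \<le> norm (a + b) * norm x"
    by (rule norm_cauchy_schwarz)
  also have "\<dots> \<le> norm (a + b) * R"
    using x by (rule mult_left_mono) simp
  finally have "2 * (r / R) \<le> norm (a + b)"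
    using R by (simp add: field_simps)
  then have "(2 * (r / R))\<^sup>2 \<le> (norm (a + b))\<^sup>2"
    using r(1) R by (intro power_mono) auto
  moreover have "(2 * (r / R))\<^sup>2 = 4 * (r / R)\<^sup>2"
    by (simp only: power_mult_distrib) simp
  moreover have "(norm (a + b))\<^sup>2 = 2 + 2 * (a \<bullet> b)"
    using dot_norm[of a b] a b by simp
  ultimately show ?thesis
    by linarith
qed

lemma ball_below_supporting_hyperplane:
  fixes u :: "'a::euclidean_space"
  assumes "norm u = 1" "0 \<le> r" "cball 0 r \<subseteq> M" "M \<subseteq> {x. u \<bullet> x \<le> h}"
  shows "r \<le> h"
proof -
  have "r *\<^sub>R u \<in> cball 0 r"
    using assms(1,2) by simp
  then have "r *\<^sub>R u \<in> M"
    using assms(3) by blast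
  then have "u \<bullet> (r *\<^sub>R u) \<le> h"
    using assms(4) by blast
  then show ?thesis
    using assms(1) by (simp add: dot_square_norm)
qed

lemma neighbor_facets_outer_normals:
  fixes M F F' :: "'a::euclidean_space set"
  assumes dim: "DIM('a) \<ge> 2" and M: "polytope M" and r: "0 < r"
    and ball: "cball 0 r \<subseteq> M" and MR: "M \<subseteq> cball 0 R" and FF': "neighbor_facets M F F'"
  shows "norm (outer_normal M F) = 1" "norm (outer_normal M F') = 1"
    and "2 * (r / R)\<^sup>2 - 1 \<le> outer_normal M F \<bullet> outer_normal M F'"
proof -
  have F: "F facet_of M" and F': "F' facet_of M" and affFF': "aff_dim (F \<inter> F') = int DIM('a) - 2"
    using FF' unfolding neighbor_facets_def by auto
  have "aff_dim (cball (0::'a) r) \<le> aff_dim M"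
    using ball by (rule aff_dim_subset)
  then have full: "aff_dim M = DIM('a)"
    using aff_dim_cball[OF r, of "0::'a"] aff_dim_le_DIM[of M] by simp
  note normal_F = outer_normal_facet[OF polytope_imp_polyhedron[OF M] full F]
  note normal_F' = outer_normal_facet[OF polytope_imp_polyhedron[OF M] full F']
  show a: "norm (outer_normal M F) = 1" and b: "norm (outer_normal M F') = 1"
    using normal_F(1) normal_F'(1) .
  obtain h where Fh: "F \<subseteq> {x. outer_normal M F \<bullet> x = h}" and Mh: "M \<subseteq> {x. outer_normal M F \<bullet> x \<le> h}"
    using normal_F(2) by blast
  obtain h' where Fh': "F' \<subseteq> {x. outer_normal M F' \<bullet> x = h'}" and Mh': "M \<subseteq> {x. outer_normal M F' \<bullet> x \<le> h'}"
    using normal_F'(2) by blast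
  have "F \<inter> F' \<noteq> {}"
    using affFF' dim by auto
  then obtain x where x: "x \<in> F" "x \<in> F'"
    by blast
  have "norm x \<le> R"
    using x(1) facet_of_imp_subset[OF F] MR by auto
  have "r \<le> h" "r \<le> h'"
    using ball_below_supporting_hyperplane[OF a _ ball Mh] ball_below_supporting_hyperplane[OF b _ ball Mh'] r
    by simp_all
  then show "2 * (r / R)\<^sup>2 - 1 \<le> outer_normal M F \<bullet> outer_normal M F'"
    using x Fh Fh' by (intro inner_lower_bound_of_common_point[OF a b \<open>norm x \<le> R\<close> r]) auto
qed

section \<open>The geodesic arc between the normals\<close>

lemma arc_param_0: "arc_param a b 0 = a"
  unfolding arc_param_def Let_def by simp

lemma arc_param_arc_len:
  fixes a b :: "'a::euclidean_space"
  assumes a: "norm a = 1" and b: "norm b = 1"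
  shows "arc_param a b (arc_len a b) = b"
proof -
  define c where "c = a \<bullet> b"
  define w where "w = b - c *\<^sub>R a"
  have c: "- 1 \<le> c" "c \<le> 1"
    unfolding c_def using Cauchy_Schwarz_ineq2[of a b] a b by auto
  have "a \<bullet> a = 1" "b \<bullet> b = 1"
    using a b by (simp_all add: dot_square_norm)
  then have "w \<bullet> w = 1 - c\<^sup>2"
    unfolding w_def c_def
    by (simp add: inner_diff_right inner_diff_left inner_commute power2_eq_square)
  then have "sin (arccos c) = norm w"
    using c by (simp add: sin_arccos norm_eq_sqrt_inner)
  \<comment> \<open>also for \<open>w = 0\<close> (i.e. \<open>b = \<plusminus>a\<close>), where \<open>w /\<^sub>R norm w = 0\<close>\<close>
  then have "sin (arccos c) *\<^sub>R (w /\<^sub>R norm w) = w"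
    by (cases "w = 0") auto
  then show ?thesis
    using c unfolding arc_param_def arc_len_def Let_def w_def c_def by simp
qed

theorem corollary7p6:
  fixes M F F' :: "(real ^ 'n) set" and r R :: real
    and f :: "real ^ 'n \<Rightarrow> real" and f' :: "real \<Rightarrow> real"
  assumes "CARD('n) \<ge> 3"
    and "polytope M"
    and "r > 0" and "R > 0"
    and "cball 0 r \<subseteq> M" and "M \<subseteq> cball 0 R"
    and "neighbor_facets M F F'"
    and "H1_deriv (arc_len (outer_normal M F) (outer_normal M F'))
           (f \<circ> arc_param (outer_normal M F) (outer_normal M F')) f'"
  shows "(LBINT t=0..arc_len (outer_normal M F) (outer_normal M F').
            (f' t)\<^sup>2 - (f (arc_param (outer_normal M F) (outer_normal M F') t))\<^sup>2)
         \<ge> r\<^sup>2 / (2 * R\<^sup>2) *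
            (LBINT t=0..arc_len (outer_normal M F) (outer_normal M F').
               (f (arc_param (outer_normal M F) (outer_normal M F') t))\<^sup>2)
           - 4 * R\<^sup>2 / r\<^sup>2 * arc_len (outer_normal M F) (outer_normal M F')
             * ((f (outer_normal M F))\<^sup>2 + (f (outer_normal M F'))\<^sup>2)"
proof -
  define a where "a = outer_normal M F"
  define b where "b = outer_normal M F'"
  define l where "l = arc_len a b"
  define \<rho> where "\<rho> = r / R"
  have a: "norm a = 1" and b: "norm b = 1" and ab: "2 * \<rho>\<^sup>2 - 1 \<le> a \<bullet> b"
    using neighbor_facets_outer_normals[OF _ assms(2,3,5,6,7)] assms(1)
    unfolding a_def b_def \<rho>_def by auto
  have "r \<le> R"
    using assms(3,5,6) cball_subset_cball_iff[of 0 r 0 R] by auto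
  then have \<rho>: "0 < \<rho>" "\<rho> \<le> 1"
    unfolding \<rho>_def using assms(3,4) by auto
  have "\<bar>a \<bullet> b\<bar> \<le> 1"
    using Cauchy_Schwarz_ineq2[of a b] a b by simp
  then have l: "0 \<le> l" "l \<le> pi - 2 * \<rho>"
    unfolding l_def arc_len_def using \<rho> ab pi_gt3
    by (auto intro!: arccos_lbound arccos_le_pi_minus_double)
  from poincare_short_arc[OF \<rho> l assms(8)[folded a_def b_def l_def]]
  have "(LBINT t=0..l. (f' t)\<^sup>2 - (f (arc_param a b t))\<^sup>2)
      \<ge> \<rho>\<^sup>2 / 2 * (LBINT t=0..l. (f (arc_param a b t))\<^sup>2) - 4 * l / \<rho>\<^sup>2 * ((f a)\<^sup>2 + (f b)\<^sup>2)"
    unfolding l_def by (simp add: arc_param_0 arc_param_arc_len[OF a b])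
  moreover have "\<rho>\<^sup>2 / 2 = r\<^sup>2 / (2 * R\<^sup>2)" "4 * l / \<rho>\<^sup>2 = 4 * R\<^sup>2 / r\<^sup>2 * l"
    unfolding \<rho>_def by (simp_all add: power_divide)
  ultimately show ?thesis
    unfolding a_def b_def l_def by (simp only:)
qed

end
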